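(* At the optimum of the sum-rate maximization problem (relaxed as in the KKT analysis), the Lagrange multipliers $\mu_1$ and $\mu_2$ associated with the constraints $\bar R_{1r}=\bar R_{r2}$ and $\bar R_{2r}=\bar R_{r1}$ satisfy $0<\mu_1<1$ and $0<\mu_2<1$; any other values of $(\mu_1,\mu_2)$ either violate one of these two rate-balancing constraints or cannot yield the maximum sum rate.
   Context: Half-duplex bidirectional relay network (users 1, 2, relay $r$, no direct link), slots $i=1,\dots,N$, $N\to\infty$, block fading with squared channel amplitudes $S_1(i),S_2(i)$ from continuous distributions, $C(x)=\log_2(1+x)$. Modes: $\mathcal M_1$ user 1$\to$relay, $\mathcal M_2$ user 2$\to$relay, $\mathcal M_3$ both users$\to$relay, $\mathcal M_4$ relay$\to$user 1, $\mathcal M_5$ relay$\to$user 2, $\mathcal M_6$ relay broadcast. Average rates: $\bar R_{1r}$ (user 1 to relay, from $\mathcal M_1,\mathcal M_3$), $\bar R_{2r}$ (user 2 to relay, from $\mathcal M_2,\mathcal M_3$), $\bar R_{r1}=\lim_N\frac1N\sum_i(q_4(i)+q_6(i))C(P_r(i)S_1(i))$, $\bar R_{r2}=\lim_N\frac1N\sum_i(q_5(i)+q_6(i))C(P_r(i)S_2(i))$, with $q_k(i)$ the mode selection indicators. The problem maximizes $\bar R_{1r}+\bar R_{2r}$ subject to $\bar R_{1r}=\bar R_{r2}$, $\bar R_{2r}=\bar R_{r1}$, a total average power constraint $\bar P_1+\bar P_2+\bar P_r\le P_t$ with multiplier $\gamma\ge0$, nonnegative powers, $\sum_kq_k(i)=1$,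 $0\le q_k(i)\le1$, and time-sharing $t(i)\in[0,1]$ in mode $\mathcal M_3$. The mode selected in each slot maximizes the metrics $\Lambda_1=(1-\mu_1)C(P_1S_1)-\gamma P_1$, $\Lambda_2=(1-\mu_2)C(P_2S_2)-\gamma P_2$, $\Lambda_3=(1-\mu_1)C_{12r}+(1-\mu_2)C_{21r}-\gamma(P_1+P_2)$, $\Lambda_4=\mu_2C(P_rS_1)-\gamma P_r$, $\Lambda_5=\mu_1C(P_rS_2)-\gamma P_r$, $\Lambda_6=\mu_1C(P_rS_2)+\mu_2C(P_rS_1)-\gamma P_r$, each evaluated at the power maximizing it over nonnegative powers. *)

theory Defs
  imports "HOL-Probability.Probability"
begin

definition Cap :: "real \<Rightarrow> real" where
  "Cap x = log 2 (1 + x)"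

text \<open>Decision taken in one slot: relaxed mode indicators q k (k = 1..6),
  transmit powers of user 1, user 2 and the relay, and the time-sharing
  parameter t used in the multiple-access mode M3.\<close>
record decision =
  q  :: "nat \<Rightarrow> real"
  p1 :: real
  p2 :: real
  pr :: real
  ts :: real

text \<open>Channel state of a slot: s = (S1, S2), squared channel amplitudes.\<close>
type_synonym chstate = "real \<times> real"

definition admissible :: "decision \<Rightarrow> bool" where
  "admissible d \<longleftrightarrow>
     (\<forall>k\<in>{1..6}. 0 \<le> q d k \<and> q d k \<le> 1) \<and> (\<Sum>k=1..6. q d k) = 1 \<and>
     0 \<le> p1 d \<and> 0 \<le> p2 d \<and> 0 \<le> pr d \<and> 0 \<le> ts d \<and> ts d \<le> 1"

text \<open>Rates of the two users in mode M3 (multiple access), time sharing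
  between the two corner points of the MAC capacity region.\<close>
definition C12r :: "chstate \<Rightarrow> decision \<Rightarrow> real" where
  "C12r s d = ts d * Cap (p1 d * fst s)
              + (1 - ts d) * Cap (p1 d * fst s / (1 + p2 d * snd s))"

definition C21r :: "chstate \<Rightarrow> decision \<Rightarrow> real" where
  "C21r s d = ts d * Cap (p2 d * snd s / (1 + p1 d * fst s))
              + (1 - ts d) * Cap (p2 d * snd s)"

definition rate_1r :: "chstate \<Rightarrow> decision \<Rightarrow> real" where
  "rate_1r s d = q d 1 * Cap (p1 d * fst s) + q d 3 * C12r s d"

definition rate_2r :: "chstate \<Rightarrow> decision \<Rightarrow> real" where
  "rate_2r s d = q d 2 * Cap (p2 d * snd s) + q d 3 * C21r s d"

definition rate_r1 :: "chstate \<Rightarrow> decision \<Rightarrow> real" where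
  "rate_r1 s d = (q d 4 + q d 6) * Cap (pr d * fst s)"

definition rate_r2 :: "chstate \<Rightarrow> decision \<Rightarrow> real" where
  "rate_r2 s d = (q d 5 + q d 6) * Cap (pr d * snd s)"

definition power :: "decision \<Rightarrow> real" where
  "power d = (q d 1 + q d 3) * p1 d + (q d 2 + q d 3) * p2 d
             + (q d 4 + q d 5 + q d 6) * pr d"

text \<open>Long-term averages over the slots (N \<rightarrow> \<infinity>) are the expectations w.r.t.
  the fading distribution M of (S1, S2) (ergodic block fading).\<close>
type_synonym policy = "chstate \<Rightarrow> decision"

definition avg :: "chstate measure \<Rightarrow> (chstate \<Rightarrow> real) \<Rightarrow> real" where
  "avg M f = integral\<^sup>L M f"

definition feasible :: "chstate measure \<Rightarrow> real \<Rightarrow> policy \<Rightarrow> bool" where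
  "feasible M Pt pol \<longleftrightarrow>
     (\<forall>s. admissible (pol s)) \<and>
     integrable M (\<lambda>s. rate_1r s (pol s)) \<and> integrable M (\<lambda>s. rate_2r s (pol s)) \<and>
     integrable M (\<lambda>s. rate_r1 s (pol s)) \<and> integrable M (\<lambda>s. rate_r2 s (pol s)) \<and>
     integrable M (\<lambda>s. power (pol s)) \<and>
     avg M (\<lambda>s. rate_1r s (pol s)) = avg M (\<lambda>s. rate_r2 s (pol s)) \<and>
     avg M (\<lambda>s. rate_2r s (pol s)) = avg M (\<lambda>s. rate_r1 s (pol s)) \<and>
     avg M (\<lambda>s. power (pol s)) \<le> Pt"

definition sum_rate :: "chstate measure \<Rightarrow> policy \<Rightarrow> real" where
  "sum_rate M pol = avg M (\<lambda>s. rate_1r s (pol s)) + avg M (\<lambda>s. rate_2r s (pol s))"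

definition optimal :: "chstate measure \<Rightarrow> real \<Rightarrow> policy \<Rightarrow> bool" where
  "optimal M Pt pol \<longleftrightarrow> feasible M Pt pol \<and>
     (\<forall>pol'. feasible M Pt pol' \<longrightarrow> sum_rate M pol' \<le> sum_rate M pol)"

definition Lam :: "real \<Rightarrow> real \<Rightarrow> real \<Rightarrow> nat \<Rightarrow> chstate \<Rightarrow> decision \<Rightarrow> real" where
  "Lam \<mu>1 \<mu>2 \<gamma> k s d =
     (if k = 1 then (1 - \<mu>1) * Cap (p1 d * fst s) - \<gamma> * p1 d
      else if k = 2 then (1 - \<mu>2) * Cap (p2 d * snd s) - \<gamma> * p2 d
      else if k = 3 then (1 - \<mu>1) * C12r s d + (1 - \<mu>2) * C21r s d - \<gamma> * (p1 d + p2 d)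
      else if k = 4 then \<mu>2 * Cap (pr d * fst s) - \<gamma> * pr d
      else if k = 5 then \<mu>1 * Cap (pr d * snd s) - \<gamma> * pr d
      else \<mu>1 * Cap (pr d * snd s) + \<mu>2 * Cap (pr d * fst s) - \<gamma> * pr d)"

definition kkt_multipliers ::
  "chstate measure \<Rightarrow> real \<Rightarrow> policy \<Rightarrow> real \<Rightarrow> real \<Rightarrow> real \<Rightarrow> bool" where
  "kkt_multipliers M Pt pol \<mu>1 \<mu>2 \<gamma> \<longleftrightarrow>
     0 \<le> \<gamma> \<and> \<gamma> * (avg M (\<lambda>s. power (pol s)) - Pt) = 0 \<and>
     (AE s in M. \<exists>k\<in>{1..6}. q (pol s) k = 1 \<and>
        (\<forall>j\<in>{1..6}. \<forall>d. admissible d \<longrightarrow>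
            Lam \<mu>1 \<mu>2 \<gamma> j s d \<le> Lam \<mu>1 \<mu>2 \<gamma> k s (pol s)))"

end

theory Submission
  imports Defs
begin

text \<open>
  The power multiplier is positive: for \<gamma> = 0 the metric of mode 1 (if \<mu>1 < 1) or of
  mode 5 (if \<mu>1 \<ge> 1) grows without bound in the power, so no mode can be maximal.
  Now let \<gamma> > 0 and suppose (\<mu>1, \<mu>2) lies outside the open unit square.
  If \<mu>1 \<ge> 1, the metrics of modes 1 and 3 are maximised with user 1 silent, so
  R1r = 0 and by balance Rr2 = 0; since mode 6 beats mode 4 as soon as \<mu>1 > 0, the relay
  serves user 1 only in slots in which it also serves user 2, hence Rr1 = R2r = 0 as well.
  If \<mu>1 \<le> 0 and \<mu>2 < 1, user 1 transmitting at the relay power beats the relay modes 4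
  and 6, and mode 5 prefers zero power, so the relay is silent and both sums vanish.
  The cases \<mu>2 \<ge> 1 and \<mu>2 \<le> 0 follow by exchanging the two users. Thus the sum rate
  is 0, whereas splitting every slot among the modes 1, 2, 4, 5 with suitable weights gives
  a feasible policy with positive sum rate.
\<close>

lemma Cap_0 [simp]: "Cap 0 = 0"
  by (simp add: Cap_def)

lemma Cap_nonneg: "0 \<le> x \<Longrightarrow> 0 \<le> Cap x"
  by (simp add: Cap_def)

lemma Cap_pos: "0 < x \<Longrightarrow> 0 < Cap x"
  by (simp add: Cap_def)

lemma Cap_mono: "0 \<le> x \<Longrightarrow> x \<le> y \<Longrightarrow> Cap x \<le> Cap y"
  by (simp add: Cap_def)

lemma Cap_le_0_iff: "0 \<le> x \<Longrightarrow> Cap x \<le> 0 \<longleftrightarrow> x = 0"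
  by (auto simp: Cap_def)

lemma Cap_mult_le_0_iff: "0 \<le> p \<Longrightarrow> 0 < S \<Longrightarrow> Cap (p * S) \<le> 0 \<longleftrightarrow> p = 0"
  by (simp add: Cap_le_0_iff)

lemma Cap_unbounded:
  assumes "0 < c" "0 < S"
  shows "\<exists>x\<ge>0. B < c * Cap (x * S)"
proof -
  define x where "x = 2 powr (B / c) / S"
  have "B / c = log 2 (2 powr (B / c))"
    by simp
  also have "\<dots> < log 2 (1 + 2 powr (B / c))"
    by (subst log_less_cancel_iff) (auto simp: add_pos_pos)
  also have "\<dots> = Cap (x * S)"
    using assms by (simp add: Cap_def x_def)
  finally have "B < c * Cap (x * S)"
    using assms by (simp add: divide_less_eq mult.commute)
  moreover have "0 \<le> x"
    using assms by (simp add: x_def)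
  ultimately show ?thesis
    by blast
qed

text \<open>
  Exchanging the users (modes 1 and 2, modes 4 and 5, the two channel gains, and the time
  sharing t with 1 - t) maps the problem to itself with \<mu>1 and \<mu>2 exchanged.
\<close>

definition mirror_mode :: "nat \<Rightarrow> nat" where
  "mirror_mode k =
     (if k = 1 then 2 else if k = 2 then 1 else if k = 4 then 5 else if k = 5 then 4 else k)"

definition mirror_decision :: "decision \<Rightarrow> decision" where
  "mirror_decision d = \<lparr>q = q d \<circ> mirror_mode, p1 = p2 d, p2 = p1 d, pr = pr d, ts = 1 - ts d\<rparr>"

lemma mirror_mode_mirror_mode [simp]: "mirror_mode (mirror_mode k) = k"
  by (simp add: mirror_mode_def)

lemma mirror_mode_simps [simp]:
  "mirror_mode 1 = 2" "mirror_mode 2 = 1" "mirror_mode 3 = 3"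
  "mirror_mode 4 = 5" "mirror_mode 5 = 4" "mirror_mode 6 = 6"
  by (simp_all add: mirror_mode_def)

lemma mirror_mode_in_modes [simp]: "mirror_mode k \<in> {1..6} \<longleftrightarrow> k \<in> {1..6}"
  by (auto simp: mirror_mode_def)

lemma mirror_decision_mirror_decision [simp]: "mirror_decision (mirror_decision d) = d"
  by (simp add: mirror_decision_def comp_def)

lemma mirror_decision_simps [simp]:
  "q (mirror_decision d) k = q d (mirror_mode k)"
  "p1 (mirror_decision d) = p2 d" "p2 (mirror_decision d) = p1 d"
  "pr (mirror_decision d) = pr d" "ts (mirror_decision d) = 1 - ts d"
  by (simp_all add: mirror_decision_def)

lemma bij_betw_mirror_mode: "bij_betw mirror_mode {1..6} {1..6}"
  by (metis (no_types) bij_betw_byWitness image_subset_iff mirror_mode_in_modes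
      mirror_mode_mirror_mode)

lemma admissible_mirror_decision [simp]: "admissible (mirror_decision d) \<longleftrightarrow> admissible d"
proof -
  have "(\<Sum>k=1..6. q d (mirror_mode k)) = (\<Sum>k=1..6. q d k)"
    using bij_betw_mirror_mode by (rule sum.reindex_bij_betw)
  moreover have "(\<forall>k\<in>{1..6}. 0 \<le> q d (mirror_mode k) \<and> q d (mirror_mode k) \<le> 1) \<longleftrightarrow>
      (\<forall>k\<in>{1..6}. 0 \<le> q d k \<and> q d k \<le> 1)"
    by (metis mirror_mode_in_modes mirror_mode_mirror_mode)
  ultimately show ?thesis
    unfolding admissible_def by auto
qed

lemma C12r_mirror [simp]: "C12r (prod.swap s) (mirror_decision d) = C21r s d"
  and C21r_mirror [simp]: "C21r (prod.swap s) (mirror_decision d) = C12r s d"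
  by (simp_all add: C12r_def C21r_def)

lemma rates_mirror [simp]:
  "rate_1r (prod.swap s) (mirror_decision d) = rate_2r s d"
  "rate_2r (prod.swap s) (mirror_decision d) = rate_1r s d"
  "rate_r1 (prod.swap s) (mirror_decision d) = rate_r2 s d"
  "rate_r2 (prod.swap s) (mirror_decision d) = rate_r1 s d"
  by (simp_all add: rate_1r_def rate_2r_def rate_r1_def rate_r2_def mirror_mode_def)

lemma Lam_mirror [simp]:
  "Lam \<mu>2 \<mu>1 \<gamma> (mirror_mode k) (prod.swap s) (mirror_decision d) = Lam \<mu>1 \<mu>2 \<gamma> k s d"
proof (cases "k \<in> {1, 2, 3, 4, 5}")
  case True
  \<comment> \<open>substitute the mode first: the simplifier would rewrite the numeral 1 to Suc 0\<close>
  then show ?thesis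
    by (elim insertE emptyE; hypsubst; simp only: mirror_mode_simps; simp add: Lam_def add_ac)
next
  case False
  then have "mirror_mode k = k"
    by (auto simp: mirror_mode_def)
  with False show ?thesis
    by (simp add: Lam_def add_ac)
qed

lemma C12r_bounds:
  assumes "admissible d" "0 \<le> fst s" "0 \<le> snd s"
  shows "0 \<le> C12r s d" "C12r s d \<le> Cap (p1 d * fst s)"
proof -
  have d: "0 \<le> ts d" "ts d \<le> 1" "0 \<le> p1 d" "0 \<le> p2 d"
    using assms(1) by (auto simp: admissible_def)
  moreover have "0 \<le> p1 d * fst s" "0 \<le> p2 d * snd s"
    using d assms by auto
  ultimately have "p1 d * fst s / (1 + p2 d * snd s) \<le> p1 d * fst s"
    by (simp add: divide_le_eq mult_le_cancel_left1)
  then have "Cap (p1 d * fst s / (1 + p2 d * snd s)) \<le> Cap (p1 d * fst s)"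
    using d assms by (intro Cap_mono) auto
  moreover have "0 \<le> Cap (p1 d * fst s / (1 + p2 d * snd s))"
    using d assms by (intro Cap_nonneg) auto
  ultimately show "0 \<le> C12r s d" "C12r s d \<le> Cap (p1 d * fst s)"
    unfolding C12r_def using d by (auto intro!: convex_bound_le)
qed

lemma C21r_bounds:
  assumes "admissible d" "0 \<le> fst s" "0 \<le> snd s"
  shows "0 \<le> C21r s d" "C21r s d \<le> Cap (p2 d * snd s)"
  using C12r_bounds[of "mirror_decision d" "prod.swap s"] assms by auto

lemma admissible_power_update:
  assumes "admissible d" "0 \<le> x"
  shows "admissible (d\<lparr>p1 := x\<rparr>)" "admissible (d\<lparr>p2 := x\<rparr>)" "admissible (d\<lparr>pr := x\<rparr>)"
  using assms by (simp_all add: admissible_def)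

locale best_mode =
  fixes \<mu>1 \<mu>2 \<gamma> :: real and s :: chstate and d :: decision and k :: nat
  assumes channels_pos: "0 < fst s" "0 < snd s"
    and admissible: "admissible d"
    and mode: "k \<in> {1..6}"
    and selected: "q d k = 1"
    and maximal: "\<And>j d'. j \<in> {1..6} \<Longrightarrow> admissible d' \<Longrightarrow>
      Lam \<mu>1 \<mu>2 \<gamma> j s d' \<le> Lam \<mu>1 \<mu>2 \<gamma> k s d"
begin

lemma mirror: "best_mode \<mu>2 \<mu>1 \<gamma> (prod.swap s) (mirror_decision d) (mirror_mode k)"
proof
  show "0 < fst (prod.swap s)" "0 < snd (prod.swap s)"
    using channels_pos by auto
  show "admissible (mirror_decision d)" "q (mirror_decision d) (mirror_mode k) = 1"
    using admissible selected by simp_all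
  show "mirror_mode k \<in> {1..6}"
    using mode by (simp only: mirror_mode_in_modes)
  fix j :: nat and d'
  assume "j \<in> {1..6}" "admissible d'"
  then have "Lam \<mu>2 \<mu>1 \<gamma> j (prod.swap s) d' = Lam \<mu>1 \<mu>2 \<gamma> (mirror_mode j) s (mirror_decision d')"
    by (metis Lam_mirror mirror_decision_mirror_decision mirror_mode_mirror_mode)
  also have "\<dots> \<le> Lam \<mu>1 \<mu>2 \<gamma> k s d"
    using \<open>j \<in> {1..6}\<close> \<open>admissible d'\<close>
    by (metis maximal mirror_mode_in_modes admissible_mirror_decision)
  also have "\<dots> = Lam \<mu>2 \<mu>1 \<gamma> (mirror_mode k) (prod.swap s) (mirror_decision d)"
    by simp
  finally show "Lam \<mu>2 \<mu>1 \<gamma> j (prod.swap s) d' \<le> \<dots>" .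
qed

lemma powers_nonneg: "0 \<le> p1 d" "0 \<le> p2 d" "0 \<le> pr d"
  using admissible by (simp_all add: admissible_def)

lemma capacities_nonneg:
  "0 \<le> Cap (p1 d * fst s)" "0 \<le> Cap (p2 d * snd s)" "0 \<le> Cap (pr d * fst s)" "0 \<le> Cap (pr d * snd s)"
  using powers_nonneg channels_pos by (simp_all add: Cap_nonneg)

lemma mac_rates_bounds:
  "0 \<le> C12r s d" "C12r s d \<le> Cap (p1 d * fst s)" "0 \<le> C21r s d" "C21r s d \<le> Cap (p2 d * snd s)"
  using C12r_bounds[of d s] C21r_bounds[of d s] admissible channels_pos by auto

lemma q_selected:
  assumes "j \<in> {1..6}"
  shows "q d j = (if j = k then 1 else 0)"
proof -
  have nonneg: "\<forall>i\<in>{1..6} - {k}. 0 \<le> q d i"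
    using admissible by (simp add: admissible_def)
  have "1 = q d k + (\<Sum>i\<in>{1..6} - {k}. q d i)"
    using admissible mode by (simp add: admissible_def sum.remove)
  then have "\<forall>i\<in>{1..6} - {k}. q d i = 0"
    using nonneg selected sum_nonneg_eq_0_iff[of "{1..6} - {k}" "q d"] by simp
  then show ?thesis
    using assms selected by auto
qed

lemma rate_1r_selected:
  "rate_1r s d = (if k = 1 then Cap (p1 d * fst s) else if k = 3 then C12r s d else 0)"
  using q_selected[of 1] q_selected[of 3] by (simp add: rate_1r_def)

lemma rate_r1_selected: "rate_r1 s d = (if k = 4 \<or> k = 6 then Cap (pr d * fst s) else 0)"
  using q_selected[of 4] q_selected[of 6] by (auto simp: rate_r1_def)

lemma rate_r2_selected: "rate_r2 s d = (if k = 5 \<or> k = 6 then Cap (pr d * snd s) else 0)"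
  using q_selected[of 5] q_selected[of 6] by (auto simp: rate_r2_def)

lemma relay_rates_nonneg: "0 \<le> rate_r1 s d" "0 \<le> rate_r2 s d"
  using capacities_nonneg by (simp_all add: rate_r1_selected rate_r2_selected)

lemma gamma_nonzero: "\<gamma> \<noteq> 0"
proof
  assume "\<gamma> = 0"
  show False
  proof (cases "\<mu>1 < 1")
    case True
    then obtain x where "0 \<le> x" "Lam \<mu>1 \<mu>2 \<gamma> k s d < (1 - \<mu>1) * Cap (x * fst s)"
      using Cap_unbounded[of "1 - \<mu>1" "fst s"] channels_pos by auto
    moreover have "Lam \<mu>1 \<mu>2 \<gamma> 1 s (d\<lparr>p1 := x\<rparr>) \<le> Lam \<mu>1 \<mu>2 \<gamma> k s d"
      using \<open>0 \<le> x\<close> admissible by (intro maximal admissible_power_update) auto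
    ultimately show False
      using \<open>\<gamma> = 0\<close> by (simp add: Lam_def)
  next
    case False
    then obtain x where "0 \<le> x" "Lam \<mu>1 \<mu>2 \<gamma> k s d < \<mu>1 * Cap (x * snd s)"
      using Cap_unbounded[of \<mu>1 "snd s"] channels_pos by auto
    moreover have "Lam \<mu>1 \<mu>2 \<gamma> 5 s (d\<lparr>pr := x\<rparr>) \<le> Lam \<mu>1 \<mu>2 \<gamma> k s d"
      using \<open>0 \<le> x\<close> admissible by (intro maximal admissible_power_update) auto
    ultimately show False
      using \<open>\<gamma> = 0\<close> by (simp add: Lam_def)
  qed
qed

lemma rate_1r_eq_0_if_mu1_ge_1:
  assumes "1 \<le> \<mu>1" "0 < \<gamma>"
  shows "rate_1r s d = 0"
proof -
  have C12r: "(1 - \<mu>1) * C12r s d \<le> 0" "(1 - \<mu>1) * Cap (p1 d * fst s) \<le> 0"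
    using assms mac_rates_bounds capacities_nonneg by (simp_all add: mult_nonpos_nonneg)
  have "\<gamma> * p1 d \<le> 0" if "k = 1 \<or> k = 3"
  proof (cases "k = 1")
    case True
    have "Lam \<mu>1 \<mu>2 \<gamma> 1 s (d\<lparr>p1 := 0\<rparr>) \<le> Lam \<mu>1 \<mu>2 \<gamma> k s d"
      using admissible by (intro maximal admissible_power_update) auto
    with True C12r show ?thesis
      by (simp add: Lam_def)
  next
    case False
    then have "k = 3"
      using that by simp
    have "Lam \<mu>1 \<mu>2 \<gamma> k s d = (1 - \<mu>1) * C12r s d + (1 - \<mu>2) * C21r s d - \<gamma> * (p1 d + p2 d)"
      using \<open>k = 3\<close> by (simp add: Lam_def)
    moreover have "0 \<le> \<gamma> * p2 d"
      using assms(2) powers_nonneg by simp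
    txt \<open>Mode 3 must beat mode 2 both at the powers of d and with user 2 silent.\<close>
    moreover have "(1 - \<mu>2) * Cap (p2 d * snd s) - \<gamma> * p2 d \<le> Lam \<mu>1 \<mu>2 \<gamma> k s d"
      using maximal[of 2 d] admissible by (simp add: Lam_def)
    moreover have "0 \<le> Lam \<mu>1 \<mu>2 \<gamma> k s d"
      using maximal[of 2 "d\<lparr>p2 := 0\<rparr>"] admissible_power_update[OF admissible] by (simp add: Lam_def)
    moreover have "(1 - \<mu>2) * C21r s d \<le> (1 - \<mu>2) * Cap (p2 d * snd s) \<or>
        (1 - \<mu>2) * C21r s d \<le> 0"
      using mac_rates_bounds
      by (cases "\<mu>2 \<le> 1") (auto intro: mult_left_mono mult_nonpos_nonneg)
    ultimately show ?thesis
      using C12r by (auto simp: algebra_simps)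
  qed
  then have "p1 d = 0" if "k = 1 \<or> k = 3"
    using that assms(2) powers_nonneg by (simp add: mult_le_0_iff)
  then show ?thesis
    by (auto simp: rate_1r_selected C12r_def)
qed

lemma rate_r1_eq_0_if_rate_r2_eq_0:
  assumes "0 < \<mu>1" "rate_r2 s d = 0"
  shows "rate_r1 s d = 0"
proof -
  have "Cap (pr d * snd s) \<le> 0" if "k = 4 \<or> k = 6"
  proof (cases "k = 4")
    case True
    have "Lam \<mu>1 \<mu>2 \<gamma> 6 s d \<le> Lam \<mu>1 \<mu>2 \<gamma> k s d"
      using admissible by (intro maximal) auto
    with True have "\<mu>1 * Cap (pr d * snd s) \<le> 0"
      by (simp add: Lam_def)
    with assms(1) show ?thesis
      by (simp add: mult_le_0_iff)
  next
    case False
    with that assms(2) show ?thesis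
      by (simp add: rate_r2_selected)
  qed
  then have "pr d = 0" if "k = 4 \<or> k = 6"
    using that Cap_mult_le_0_iff powers_nonneg channels_pos by blast
  then show ?thesis
    by (simp add: rate_r1_selected)
qed

lemma relay_silent_if_mu1_le_0:
  assumes "\<mu>1 \<le> 0" "\<mu>2 < 1" "0 < \<gamma>"
  shows "rate_r1 s d = 0" "rate_r2 s d = 0"
proof -
  have "pr d = 0" if "k = 4 \<or> k = 5 \<or> k = 6"
  proof (cases "k = 5")
    case True
    have "Lam \<mu>1 \<mu>2 \<gamma> 5 s (d\<lparr>pr := 0\<rparr>) \<le> Lam \<mu>1 \<mu>2 \<gamma> k s d"
      using admissible by (intro maximal admissible_power_update) auto
    moreover have "\<mu>1 * Cap (pr d * snd s) \<le> 0"
      using assms(1) capacities_nonneg by (simp add: mult_nonpos_nonneg)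
    ultimately have "\<gamma> * pr d \<le> 0"
      using True by (simp add: Lam_def)
    then show ?thesis
      using assms(3) powers_nonneg by (simp add: mult_le_0_iff)
  next
    case False
    txt \<open>Serving user 1 through the relay is beaten by user 1 transmitting at the relay power.\<close>
    have "(1 - \<mu>1) * Cap (pr d * fst s) - \<gamma> * pr d \<le> Lam \<mu>1 \<mu>2 \<gamma> k s d"
      using maximal[of 1 "d\<lparr>p1 := pr d\<rparr>"] admissible_power_update[OF admissible] powers_nonneg
      by (simp add: Lam_def)
    moreover have "\<mu>1 * Cap (pr d * snd s) \<le> 0"
      using assms(1) capacities_nonneg by (simp add: mult_nonpos_nonneg)
    moreover have "k = 4 \<or> k = 6"
      using False that by simp
    ultimately have "(1 - \<mu>1) * Cap (pr d * fst s) \<le> \<mu>2 * Cap (pr d * fst s)"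
      by (auto simp: Lam_def)
    then have "(1 - \<mu>1 - \<mu>2) * Cap (pr d * fst s) \<le> 0"
      by (simp add: left_diff_distrib)
    moreover have "0 < 1 - \<mu>1 - \<mu>2"
      using assms by simp
    ultimately have "Cap (pr d * fst s) \<le> 0"
      by (simp add: mult_le_0_iff)
    then show ?thesis
      using Cap_mult_le_0_iff powers_nonneg channels_pos by blast
  qed
  then show "rate_r1 s d = 0" "rate_r2 s d = 0"
    by (auto simp: rate_r1_selected rate_r2_selected)
qed

lemma rate_2r_eq_0_if_mu2_ge_1:
  assumes "1 \<le> \<mu>2" "0 < \<gamma>"
  shows "rate_2r s d = 0"
proof -
  interpret mirrored: best_mode \<mu>2 \<mu>1 \<gamma> "prod.swap s" "mirror_decision d" "mirror_mode k"
    by (rule mirror)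
  show ?thesis
    using mirrored.rate_1r_eq_0_if_mu1_ge_1 assms by simp
qed

lemma rate_r2_eq_0_if_rate_r1_eq_0:
  assumes "0 < \<mu>2" "rate_r1 s d = 0"
  shows "rate_r2 s d = 0"
proof -
  interpret mirrored: best_mode \<mu>2 \<mu>1 \<gamma> "prod.swap s" "mirror_decision d" "mirror_mode k"
    by (rule mirror)
  show ?thesis
    using mirrored.rate_r1_eq_0_if_rate_r2_eq_0 assms by simp
qed

lemma relay_silent_if_mu2_le_0:
  assumes "\<mu>2 \<le> 0" "\<mu>1 < 1" "0 < \<gamma>"
  shows "rate_r1 s d = 0" "rate_r2 s d = 0"
proof -
  interpret mirrored: best_mode \<mu>2 \<mu>1 \<gamma> "prod.swap s" "mirror_decision d" "mirror_mode k"
    by (rule mirror)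
  show "rate_r1 s d = 0" "rate_r2 s d = 0"
    using mirrored.relay_silent_if_mu1_le_0 assms by simp_all
qed

end

lemma AE_best_mode:
  assumes "kkt_multipliers M Pt pol \<mu>1 \<mu>2 \<gamma>" "feasible M Pt pol"
    and "AE s in M. 0 < fst s \<and> 0 < snd s"
  shows "AE s in M. \<exists>k. best_mode \<mu>1 \<mu>2 \<gamma> s (pol s) k"
proof -
  have adm: "admissible (pol s)" for s
    using assms(2) unfolding feasible_def by blast
  have "AE s in M. \<exists>k\<in>{1..6}. q (pol s) k = 1 \<and>
      (\<forall>j\<in>{1..6}. \<forall>d. admissible d \<longrightarrow> Lam \<mu>1 \<mu>2 \<gamma> j s d \<le> Lam \<mu>1 \<mu>2 \<gamma> k s (pol s))"
    using assms(1) by (simp add: kkt_multipliers_def)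
  with assms(3) show ?thesis
    by eventually_elim (use adm in \<open>auto simp: best_mode_def\<close>)
qed

lemma kkt_gamma_pos:
  assumes "prob_space M" "kkt_multipliers M Pt pol \<mu>1 \<mu>2 \<gamma>"
    and "AE s in M. \<exists>k. best_mode \<mu>1 \<mu>2 \<gamma> s (pol s) k"
  shows "0 < \<gamma>"
proof -
  interpret prob_space M
    by fact
  have "AE s in M. \<gamma> \<noteq> 0"
    using assms(3) by eventually_elim (use best_mode.gamma_nonzero in blast)
  moreover have "0 \<le> \<gamma>"
    using assms(2) by (simp add: kkt_multipliers_def)
  ultimately show ?thesis
    by simp
qed

lemma avg_eq_0_if_AE_eq_0: "AE x in M. f x = 0 \<Longrightarrow> avg M f = 0"
  unfolding avg_def by (rule integral_eq_zero_AE)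

lemma avg_eq_0_propagate:
  fixes f g h :: "chstate \<Rightarrow> real"
  assumes "integrable M g" "AE x in M. 0 \<le> g x" "avg M f = avg M g"
    and "AE x in M. f x = 0" "AE x in M. g x = 0 \<longrightarrow> h x = 0"
  shows "avg M h = 0"
proof -
  have "avg M g = 0"
    using assms(3,4) avg_eq_0_if_AE_eq_0 by metis
  then have "AE x in M. g x = 0"
    using integral_nonneg_eq_0_iff_AE[OF assms(1,2)] by (simp add: avg_def)
  with assms(5) have "AE x in M. h x = 0"
    by eventually_elim simp
  then show ?thesis
    by (rule avg_eq_0_if_AE_eq_0)
qed

lemma sum_rate_eq_0_if_multipliers_outside:
  assumes "feasible M Pt pol" "AE s in M. \<exists>k. best_mode \<mu>1 \<mu>2 \<gamma> s (pol s) k" "0 < \<gamma>"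
    and "\<not> (0 < \<mu>1 \<and> \<mu>1 < 1 \<and> 0 < \<mu>2 \<and> \<mu>2 < 1)"
  shows "sum_rate M pol = 0"
proof -
  let ?R1r = "\<lambda>s. rate_1r s (pol s)" and ?R2r = "\<lambda>s. rate_2r s (pol s)"
  let ?Rr1 = "\<lambda>s. rate_r1 s (pol s)" and ?Rr2 = "\<lambda>s. rate_r2 s (pol s)"
  have balance: "avg M ?R1r = avg M ?Rr2" "avg M ?R2r = avg M ?Rr1"
    and integrable: "integrable M ?Rr1" "integrable M ?Rr2"
    using assms(1) by (simp_all add: feasible_def)
  have "AE s in M. 0 \<le> ?Rr1 s \<and> 0 \<le> ?Rr2 s"
    using assms(2) by eventually_elim (use best_mode.relay_rates_nonneg in blast)
  then have nonneg: "AE s in M. 0 \<le> ?Rr1 s" "AE s in M. 0 \<le> ?Rr2 s"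
    by (simp_all add: AE_conj_iff)
  consider "1 \<le> \<mu>1" | "1 \<le> \<mu>2" | "\<mu>1 \<le> 0" "\<mu>2 < 1" | "\<mu>2 \<le> 0" "\<mu>1 < 1"
    using assms(4) by linarith
  then show ?thesis
  proof cases
    case 1
    have silent: "AE s in M. ?R1r s = 0"
      using assms(2) by eventually_elim (use best_mode.rate_1r_eq_0_if_mu1_ge_1 1 assms(3) in blast)
    have "AE s in M. ?Rr2 s = 0 \<longrightarrow> ?Rr1 s = 0"
      using assms(2) by eventually_elim (use best_mode.rate_r1_eq_0_if_rate_r2_eq_0 1 in force)
    then have "avg M ?Rr1 = 0"
      using integrable nonneg balance silent by (intro avg_eq_0_propagate[where f = ?R1r and g = ?Rr2])
    with silent show ?thesis
      using balance by (simp add: sum_rate_def avg_eq_0_if_AE_eq_0)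
  next
    case 2
    have silent: "AE s in M. ?R2r s = 0"
      using assms(2) by eventually_elim (use best_mode.rate_2r_eq_0_if_mu2_ge_1 2 assms(3) in blast)
    have "AE s in M. ?Rr1 s = 0 \<longrightarrow> ?Rr2 s = 0"
      using assms(2) by eventually_elim (use best_mode.rate_r2_eq_0_if_rate_r1_eq_0 2 in force)
    then have "avg M ?Rr2 = 0"
      using integrable nonneg balance silent by (intro avg_eq_0_propagate[where f = ?R2r and g = ?Rr1])
    with silent show ?thesis
      using balance by (simp add: sum_rate_def avg_eq_0_if_AE_eq_0)
  next
    case 3
    have "AE s in M. ?Rr1 s = 0 \<and> ?Rr2 s = 0"
      using assms(2) by eventually_elim (use best_mode.relay_silent_if_mu1_le_0 3 assms(3) in blast)
    then show ?thesis
      using balance by (simp add: sum_rate_def avg_eq_0_if_AE_eq_0 AE_conj_iff)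
  next
    case 4
    have "AE s in M. ?Rr1 s = 0 \<and> ?Rr2 s = 0"
      using assms(2) by eventually_elim (use best_mode.relay_silent_if_mu2_le_0 4 assms(3) in blast)
    then show ?thesis
      using balance by (simp add: sum_rate_def avg_eq_0_if_AE_eq_0 AE_conj_iff)
  qed
qed

definition balanced_decision :: "real \<Rightarrow> chstate \<Rightarrow> decision" where
  "balanced_decision P s =
     (let a = Cap (P * fst s); b = Cap (P * snd s)
      in \<lparr>q = \<lambda>k. if k = 1 \<or> k = 4 then b / (2 * (a + b))
                   else if k = 2 \<or> k = 5 then a / (2 * (a + b)) else 0,
          p1 = P, p2 = P, pr = P, ts = 0\<rparr>)"

lemma balanced_decision_rates:
  assumes "0 < P" "0 < fst s" "0 < snd s"
  defines "r \<equiv> Cap (P * fst s) * Cap (P * snd s) / (2 * (Cap (P * fst s) + Cap (P * snd s)))"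
  shows "admissible (balanced_decision P s)"
    and "rate_1r s (balanced_decision P s) = r" "rate_2r s (balanced_decision P s) = r"
    and "rate_r1 s (balanced_decision P s) = r" "rate_r2 s (balanced_decision P s) = r"
    and "power (balanced_decision P s) = P"
proof -
  define a b where "a = Cap (P * fst s)" and "b = Cap (P * snd s)"
  have "0 < a" "0 < b"
    using assms by (simp_all add: a_def b_def Cap_pos)
  then have weights: "b / (2 * (a + b)) \<le> 1" "a / (2 * (a + b)) \<le> 1"
    "b / (2 * (a + b)) + a / (2 * (a + b)) = 1 / 2"
    by (simp_all add: divide_le_eq add_divide_distrib[symmetric] add.commute)
  have d: "balanced_decision P s = \<lparr>q = \<lambda>k. if k = 1 \<or> k = 4 then b / (2 * (a + b))
      else if k = 2 \<or> k = 5 then a / (2 * (a + b)) else 0, p1 = P, p2 = P, pr = P, ts = 0\<rparr>"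
    unfolding a_def b_def by (simp add: balanced_decision_def Let_def)
  show "admissible (balanced_decision P s)"
    unfolding d admissible_def using weights \<open>0 < a\<close> \<open>0 < b\<close> assms(1)
    by (auto simp: eval_nat_numeral) (simp add: field_simps)
  show "rate_1r s (balanced_decision P s) = r" "rate_2r s (balanced_decision P s) = r"
    "rate_r1 s (balanced_decision P s) = r" "rate_r2 s (balanced_decision P s) = r"
    unfolding d r_def a_def[symmetric] b_def[symmetric]
    by (simp_all add: rate_1r_def rate_2r_def rate_r1_def rate_r2_def a_def[symmetric] b_def[symmetric])
  have "power (balanced_decision P s) = 2 * (b / (2 * (a + b)) + a / (2 * (a + b))) * P"
    unfolding d power_def by (simp add: algebra_simps)
  also have "\<dots> = P"
    unfolding weights(3) by simp
  finally show "power (balanced_decision P s) = P" .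
qed

definition idle_decision :: decision where
  "idle_decision = \<lparr>q = \<lambda>k. if k = 1 then 1 else 0, p1 = 0, p2 = 0, pr = 0, ts = 0\<rparr>"

lemma idle_decision_rates:
  "admissible idle_decision" "rate_1r s idle_decision = 0" "rate_2r s idle_decision = 0"
  "rate_r1 s idle_decision = 0" "rate_r2 s idle_decision = 0" "power idle_decision = 0"
  by (simp_all add: idle_decision_def admissible_def eval_nat_numeral rate_1r_def rate_2r_def
      rate_r1_def rate_r2_def power_def C12r_def C21r_def)

text \<open>
  The power Pt / (1 + S1 + S2) keeps every SNR below Pt, so all rates are bounded by Cap Pt
  and hence integrable.
\<close>

definition balanced_power :: "real \<Rightarrow> chstate \<Rightarrow> real" where
  "balanced_power Pt s = (if 0 < fst s \<and> 0 < snd s then Pt / (1 + fst s + snd s) else 0)"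

definition balanced_rate :: "real \<Rightarrow> chstate \<Rightarrow> real" where
  "balanced_rate Pt s =
     (let a = Cap (balanced_power Pt s * fst s); b = Cap (balanced_power Pt s * snd s)
      in a * b / (2 * (a + b)))"

definition balanced_policy :: "real \<Rightarrow> policy" where
  "balanced_policy Pt s =
     (if 0 < fst s \<and> 0 < snd s then balanced_decision (balanced_power Pt s) s else idle_decision)"

lemma balanced_policy_rates:
  assumes "0 < Pt"
  shows "admissible (balanced_policy Pt s)"
    and "rate_1r s (balanced_policy Pt s) = balanced_rate Pt s"
    and "rate_2r s (balanced_policy Pt s) = balanced_rate Pt s"
    and "rate_r1 s (balanced_policy Pt s) = balanced_rate Pt s"
    and "rate_r2 s (balanced_policy Pt s) = balanced_rate Pt s"
    and "power (balanced_policy Pt s) = balanced_power Pt s"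
proof -
  let ?d = "balanced_policy Pt s" and ?r = "balanced_rate Pt s"
  have "admissible ?d \<and> rate_1r s ?d = ?r \<and> rate_2r s ?d = ?r \<and> rate_r1 s ?d = ?r \<and>
      rate_r2 s ?d = ?r \<and> power ?d = balanced_power Pt s"
  proof (cases "0 < fst s \<and> 0 < snd s")
    case True
    then have "?d = balanced_decision (balanced_power Pt s) s" "0 < balanced_power Pt s"
      using assms by (simp_all add: balanced_policy_def balanced_power_def)
    with True show ?thesis
      using balanced_decision_rates[of "balanced_power Pt s" s]
      by (simp add: balanced_rate_def Let_def)
  next
    case False
    then have "?d = idle_decision" "balanced_power Pt s = 0"
      by (auto simp: balanced_policy_def balanced_power_def)
    then show ?thesis
      using idle_decision_rates by (simp add: balanced_rate_def)
  qed
  then show "admissible ?d" "rate_1r s ?d = ?r" "rate_2r s ?d = ?r" "rate_r1 s ?d = ?r"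
    "rate_r2 s ?d = ?r" "power ?d = balanced_power Pt s"
    by simp_all
qed

lemma balanced_power_bounds: "0 < Pt \<Longrightarrow> 0 \<le> balanced_power Pt s \<and> balanced_power Pt s \<le> Pt"
  by (auto simp: balanced_power_def field_simps)

lemma balanced_rate_bounds:
  assumes "0 < Pt"
  shows "0 \<le> balanced_rate Pt s" "balanced_rate Pt s \<le> Cap Pt"
    and "0 < fst s \<Longrightarrow> 0 < snd s \<Longrightarrow> 0 < balanced_rate Pt s"
proof -
  define a b where "a = Cap (balanced_power Pt s * fst s)" and "b = Cap (balanced_power Pt s * snd s)"
  have rate: "balanced_rate Pt s = a * b / (2 * (a + b))"
    by (simp add: balanced_rate_def a_def b_def Let_def)
  have "balanced_power Pt s * fst s \<le> Pt" "balanced_power Pt s * snd s \<le> Pt"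
    and "0 \<le> balanced_power Pt s * fst s" "0 \<le> balanced_power Pt s * snd s"
    using assms by (auto simp: balanced_power_def field_simps)
  then have "0 \<le> a" "0 \<le> b" "a \<le> Cap Pt"
    by (simp_all add: a_def b_def Cap_nonneg Cap_mono)
  moreover have "a * b / (2 * (a + b)) \<le> a"
    using \<open>0 \<le> a\<close> \<open>0 \<le> b\<close> by (cases "a + b = 0") (simp_all add: divide_le_eq algebra_simps)
  ultimately show "0 \<le> balanced_rate Pt s" "balanced_rate Pt s \<le> Cap Pt"
    unfolding rate by simp_all
  assume "0 < fst s" "0 < snd s"
  then have "0 < a" "0 < b"
    using assms by (simp_all add: a_def b_def balanced_power_def Cap_pos)
  then show "0 < balanced_rate Pt s"
    unfolding rate by simp
qed

lemma balanced_measurable: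
  assumes "sets M = sets borel"
  shows "balanced_rate Pt \<in> borel_measurable M" "balanced_power Pt \<in> borel_measurable M"
proof -
  have borel_M: "borel_measurable M = borel_measurable (borel \<Otimes>\<^sub>M borel :: chstate measure)"
    using measurable_cong_sets[OF assms refl] by (simp add: borel_prod)
  show "balanced_rate Pt \<in> borel_measurable M" "balanced_power Pt \<in> borel_measurable M"
    unfolding borel_M balanced_rate_def balanced_power_def Cap_def Let_def by measurable
qed

lemma exists_feasible_positive_sum_rate:
  assumes "prob_space M" "sets M = sets borel" "AE s in M. 0 < fst s \<and> 0 < snd s" "0 < Pt"
  shows "\<exists>pol. feasible M Pt pol \<and> 0 < sum_rate M pol"
proof -
  interpret prob_space M
    by fact
  note measurable = balanced_measurable[OF assms(2), of Pt]
  note rate_bounds = balanced_rate_bounds[OF assms(4)]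
  note power_bounds = balanced_power_bounds[OF assms(4)]
  have integrable: "integrable M (balanced_rate Pt)" "integrable M (balanced_power Pt)"
    by (rule integrable_const_bound[where B = "Cap Pt"]; use measurable rate_bounds in simp)
      (rule integrable_const_bound[where B = Pt]; use measurable power_bounds in simp)
  have "avg M (balanced_power Pt) \<le> Pt"
    using integral_mono[OF integrable(2), of "\<lambda>_. Pt"] power_bounds by (simp add: avg_def prob_space)
  moreover have "0 < avg M (balanced_rate Pt)"
  proof -
    have "\<not> (AE s in M. balanced_rate Pt s = 0)"
    proof
      assume "AE s in M. balanced_rate Pt s = 0"
      with assms(3) have "AE s in M. False"
        by eventually_elim (use rate_bounds in force)
      then show False
        by simp
    qed
    then have "avg M (balanced_rate Pt) \<noteq> 0"
      using integral_nonneg_eq_0_iff_AE[OF integrable(1)] rate_bounds by (simp add: avg_def)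
    with rate_bounds show ?thesis
      by (simp add: avg_def integral_nonneg less_le)
  qed
  ultimately show ?thesis
    using balanced_policy_rates[OF assms(4)] integrable
    by (intro exI[of _ "balanced_policy Pt"]) (simp add: feasible_def sum_rate_def)
qed

lemma AE_neq_if_level_set_null:
  fixes f :: "'a::topological_space \<Rightarrow> 'b::t2_space"
  assumes "finite_measure M" "sets M = sets borel" "continuous_on UNIV f"
    and "measure M {x. f x = c} = 0"
  shows "AE x in M. f x \<noteq> c"
proof -
  have "{x. f x = c} \<in> sets M"
    using assms(2,3) by (simp add: borel_closed closed_Collect_eq)
  moreover have "emeasure M {x. f x = c} = 0"
    using assms(1,4) by (simp add: finite_measure.emeasure_eq_measure)
  ultimately have "{x. f x = c} \<in> null_sets M"
    by (auto intro: null_setsI)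
  from AE_not_in[OF this] show ?thesis
    by simp
qed

theorem mainTheorem5:
  fixes M :: "(real \<times> real) measure" and Pt :: real and pol :: policy
    and \<mu>1 \<mu>2 \<gamma> :: real
  assumes "prob_space M"
    and "sets M = sets borel"
    and "AE s in M. 0 \<le> fst s \<and> 0 \<le> snd s"
    and "\<And>x. measure M {s. fst s = x} = 0"
    and "\<And>x. measure M {s. snd s = x} = 0"
    and "0 < Pt"
    and "optimal M Pt pol"
    and "kkt_multipliers M Pt pol \<mu>1 \<mu>2 \<gamma>"
  shows "0 < \<mu>1 \<and> \<mu>1 < 1 \<and> 0 < \<mu>2 \<and> \<mu>2 < 1"
proof (rule ccontr)
  assume outside: "\<not> (0 < \<mu>1 \<and> \<mu>1 < 1 \<and> 0 < \<mu>2 \<and> \<mu>2 < 1)"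
  have finite: "finite_measure M"
    using assms(1) by (simp add: prob_space_def)
  have "AE s in M. fst s \<noteq> 0" "AE s in M. snd s \<noteq> 0"
    using AE_neq_if_level_set_null[OF finite assms(2) continuous_on_fst[OF continuous_on_id] assms(4)]
      AE_neq_if_level_set_null[OF finite assms(2) continuous_on_snd[OF continuous_on_id] assms(5)]
    by simp_all
  with assms(3) have channels: "AE s in M. 0 < fst s \<and> 0 < snd s"
    by eventually_elim auto
  have feasible: "feasible M Pt pol"
    using assms(7) by (simp add: optimal_def)
  have best: "AE s in M. \<exists>k. best_mode \<mu>1 \<mu>2 \<gamma> s (pol s) k"
    using assms(8) feasible channels by (rule AE_best_mode)
  then have "sum_rate M pol = 0"
    using feasible kkt_gamma_pos[OF assms(1,8) best] outside
    by (intro sum_rate_eq_0_if_multipliers_outside)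
  moreover obtain pol' where "feasible M Pt pol'" "0 < sum_rate M pol'"
    using exists_feasible_positive_sum_rate[OF assms(1,2) channels assms(6)] by blast
  ultimately show False
    using assms(7) by (force simp: optimal_def)
qed

end
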